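(* Let $\mathbb{A}=(\mathbb{L},(\lozenge_i)_{i\in\mathsf{Ag}},(\Box_i)_{i\in\mathsf{Ag}})$ be an epistemic Heyting algebra and $a\in\mathbb{A}$. Then the pseudo-quotient algebra $\mathbb{A}^a$ is an epistemic Heyting algebra.
   Context: Fix a set $\mathsf{Ag}$ of agents. A monadic Heyting algebra is a Heyting algebra $\mathbb{L}$ with, for each $i\in\mathsf{Ag}$, monotone unary operations $\lozenge_i,\Box_i$ such that for all $a,b$: $a\leq\lozenge_i a$; $\Box_i a\leq a$; $\lozenge_i(a\vee b)\leq\lozenge_i a\vee\lozenge_i b$; $\Box_i(a\to b)\leq\Box_i a\to\Box_i b$; $\lozenge_i a\leq\Box_i\lozenge_i a$; $\lozenge_i\Box_i a\leq\Box_i a$; $\Box_i(a\to b)\leq\lozenge_i a\to\lozenge_i b$; $\lozenge_i\bot\leq\bot$; $\top\leq\Box_i\top$. An epistemic Heyting algebra is a finite monadic Heyting algebra with $\lozenge_i a\vee\neg\lozenge_i a=\top$ for all $i,a$. The pseudo-quotient algebra $\mathbb{A}^a=(\mathbb{L}/{\cong_a},(\lozenge^a_i),(\Box^a_i))$: $b\cong_a c$ iff $b\wedge a=c\wedge a$; $\mathbb{L}/{\cong_a}$ is the quotient Heyting algebra (writing $[c]$ for the class of $c$); and $\lozenge^a_i[b]=[\lozenge_i(b\wedge a)]$, $\Box^a_i[b]=[\Box_i(a\to b)]$. *)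

theory Defs
  imports Main
begin

record ('i, 'a) mha =
  carrier :: "'a set"
  meet :: "'a \<Rightarrow> 'a \<Rightarrow> 'a"
  join :: "'a \<Rightarrow> 'a \<Rightarrow> 'a"
  imp  :: "'a \<Rightarrow> 'a \<Rightarrow> 'a"
  bot  :: 'a
  top  :: 'a
  dia  :: "'i \<Rightarrow> 'a \<Rightarrow> 'a"
  box  :: "'i \<Rightarrow> 'a \<Rightarrow> 'a"

definition le :: "('i, 'a) mha \<Rightarrow> 'a \<Rightarrow> 'a \<Rightarrow> bool" where
  "le A x y \<longleftrightarrow> meet A x y = x"

definition neg :: "('i, 'a) mha \<Rightarrow> 'a \<Rightarrow> 'a" where
  "neg A x = imp A x (bot A)"

definition heyting_algebra :: "('i, 'a) mha \<Rightarrow> bool" where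
  "heyting_algebra A \<longleftrightarrow>
     bot A \<in> carrier A \<and> top A \<in> carrier A \<and>
     (\<forall>x\<in>carrier A. \<forall>y\<in>carrier A.
        meet A x y \<in> carrier A \<and> join A x y \<in> carrier A \<and> imp A x y \<in> carrier A) \<and>
     (\<forall>x\<in>carrier A. \<forall>y\<in>carrier A. \<forall>z\<in>carrier A.
        meet A (meet A x y) z = meet A x (meet A y z) \<and>
        join A (join A x y) z = join A x (join A y z)) \<and>
     (\<forall>x\<in>carrier A. \<forall>y\<in>carrier A.
        meet A x y = meet A y x \<and> join A x y = join A y x \<and>
        meet A x (join A x y) = x \<and> join A x (meet A x y) = x) \<and>
     (\<forall>x\<in>carrier A. le A (bot A) x \<and> le A x (top A)) \<and>
     (\<forall>x\<in>carrier A. \<forall>y\<in>carrier A. \<forall>z\<in>carrier A.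
        le A z (imp A x y) \<longleftrightarrow> le A (meet A z x) y)"

definition monadic_heyting_algebra :: "'i set \<Rightarrow> ('i, 'a) mha \<Rightarrow> bool" where
  "monadic_heyting_algebra Ag A \<longleftrightarrow>
     heyting_algebra A \<and>
     (\<forall>i\<in>Ag.
        (\<forall>x\<in>carrier A. dia A i x \<in> carrier A \<and> box A i x \<in> carrier A) \<and>
        (\<forall>x\<in>carrier A. \<forall>y\<in>carrier A. le A x y \<longrightarrow>
            le A (dia A i x) (dia A i y) \<and> le A (box A i x) (box A i y)) \<and>
        (\<forall>a\<in>carrier A. \<forall>b\<in>carrier A.
           le A a (dia A i a) \<and>
           le A (box A i a) a \<and>
           le A (dia A i (join A a b)) (join A (dia A i a) (dia A i b)) \<and>
           le A (box A i (imp A a b)) (imp A (box A i a) (box A i b)) \<and>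
           le A (dia A i a) (box A i (dia A i a)) \<and>
           le A (dia A i (box A i a)) (box A i a) \<and>
           le A (box A i (imp A a b)) (imp A (dia A i a) (dia A i b))) \<and>
        le A (dia A i (bot A)) (bot A) \<and>
        le A (top A) (box A i (top A)))"

definition epistemic_heyting_algebra :: "'i set \<Rightarrow> ('i, 'a) mha \<Rightarrow> bool" where
  "epistemic_heyting_algebra Ag A \<longleftrightarrow>
     monadic_heyting_algebra Ag A \<and> finite (carrier A) \<and>
     (\<forall>i\<in>Ag. \<forall>x\<in>carrier A.
        join A (dia A i x) (neg A (dia A i x)) = top A)"

definition cls :: "('i, 'a) mha \<Rightarrow> 'a \<Rightarrow> 'a \<Rightarrow> 'a set" where
  "cls A a b = {c \<in> carrier A. meet A c a = meet A b a}"

definition rep :: "'a set \<Rightarrow> 'a" where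
  "rep X = (SOME x. x \<in> X)"

definition pseudo_quotient :: "('i, 'a) mha \<Rightarrow> 'a \<Rightarrow> ('i, 'a set) mha" where
  "pseudo_quotient A a =
    \<lparr> carrier = cls A a ` carrier A,
      meet = (\<lambda>X Y. cls A a (meet A (rep X) (rep Y))),
      join = (\<lambda>X Y. cls A a (join A (rep X) (rep Y))),
      imp  = (\<lambda>X Y. cls A a (imp A (rep X) (rep Y))),
      bot  = cls A a (bot A),
      top  = cls A a (top A),
      dia  = (\<lambda>i X. cls A a (dia A i (meet A (rep X) a))),
      box  = (\<lambda>i X. cls A a (box A i (imp A a (rep X)))) \<rparr>"

end

theory Submission
  imports Defs
begin

text \<open>Meeting with \<open>a\<close> respects the Heyting operations up to \<open>\<cong>\<^sub>a\<close>: \<open>(b \<and> c) \<and> a\<close>,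
  \<open>(b \<or> c) \<and> a\<close> and \<open>(b \<rightarrow> c) \<and> a\<close> depend only on \<open>b \<and> a\<close> and \<open>c \<and> a\<close>, so the operations of
  \<open>\<AA>\<^sup>a\<close> computed on representatives are well defined, and \<open>[b] \<le> [c]\<close> iff \<open>b \<and> a \<le> c\<close>.
  Hence every axiom of \<open>\<AA>\<^sup>a\<close> follows from an inequality in \<open>\<LL>\<close>, obtained from the
  corresponding axiom of \<open>\<AA>\<close> applied to \<open>b \<and> a\<close> or \<open>a \<rightarrow> b\<close>, together with the Heyting laws
  \<open>a \<rightarrow> (b \<rightarrow> c) \<le> (a \<rightarrow> b) \<rightarrow> (a \<rightarrow> c)\<close> and \<open>a \<rightarrow> (b \<rightarrow> c) \<le> (b \<and> a) \<rightarrow> (c \<and> a)\<close>.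
  Since \<open>\<diamond>\<^sup>a\<^sub>i[b]\<close> is the class of \<open>\<diamond>\<^sub>i(b \<and> a)\<close>, the law \<open>\<diamond>x \<or> \<not>\<diamond>x = \<top>\<close> passes to \<open>\<AA>\<^sup>a\<close>.\<close>

locale heyting =
  fixes A :: "('i, 'a) mha"
  assumes heyting_algebra: "heyting_algebra A"
begin

abbreviation C :: "'a set" where "C \<equiv> carrier A"
abbreviation meet_A (infixl "\<sqinter>" 70) where "x \<sqinter> y \<equiv> meet A x y"
abbreviation join_A (infixl "\<squnion>" 65) where "x \<squnion> y \<equiv> join A x y"
abbreviation imp_A (infixr "\<Rightarrow>\<^sub>A" 60) where "x \<Rightarrow>\<^sub>A y \<equiv> imp A x y"
abbreviation le_A (infix "\<preceq>" 50) where "x \<preceq> y \<equiv> le A x y"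

lemma carrier_closed [simp]:
  "bot A \<in> C" "top A \<in> C"
  "x \<in> C \<Longrightarrow> y \<in> C \<Longrightarrow> x \<sqinter> y \<in> C"
  "x \<in> C \<Longrightarrow> y \<in> C \<Longrightarrow> x \<squnion> y \<in> C"
  "x \<in> C \<Longrightarrow> y \<in> C \<Longrightarrow> (x \<Rightarrow>\<^sub>A y) \<in> C"
  using heyting_algebra unfolding heyting_algebra_def by auto

lemma meet_assoc: "x \<in> C \<Longrightarrow> y \<in> C \<Longrightarrow> z \<in> C \<Longrightarrow> x \<sqinter> y \<sqinter> z = x \<sqinter> (y \<sqinter> z)"
  and join_assoc: "x \<in> C \<Longrightarrow> y \<in> C \<Longrightarrow> z \<in> C \<Longrightarrow> x \<squnion> y \<squnion> z = x \<squnion> (y \<squnion> z)"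
  and meet_commute: "x \<in> C \<Longrightarrow> y \<in> C \<Longrightarrow> x \<sqinter> y = y \<sqinter> x"
  and join_commute: "x \<in> C \<Longrightarrow> y \<in> C \<Longrightarrow> x \<squnion> y = y \<squnion> x"
  and meet_join_absorb: "x \<in> C \<Longrightarrow> y \<in> C \<Longrightarrow> x \<sqinter> (x \<squnion> y) = x"
  and join_meet_absorb: "x \<in> C \<Longrightarrow> y \<in> C \<Longrightarrow> x \<squnion> (x \<sqinter> y) = x"
  and bot_le: "x \<in> C \<Longrightarrow> bot A \<preceq> x"
  and le_top: "x \<in> C \<Longrightarrow> x \<preceq> top A"
  and le_imp_iff: "x \<in> C \<Longrightarrow> y \<in> C \<Longrightarrow> z \<in> C \<Longrightarrow> z \<preceq> (x \<Rightarrow>\<^sub>A y) \<longleftrightarrow> z \<sqinter> x \<preceq> y"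
  using heyting_algebra unfolding heyting_algebra_def by auto

lemma meet_idem: "x \<in> C \<Longrightarrow> x \<sqinter> x = x"
  using meet_join_absorb[of x "x \<sqinter> x"] join_meet_absorb[of x x] by simp

lemma le_refl: "x \<in> C \<Longrightarrow> x \<preceq> x"
  by (simp add: le_def meet_idem)

lemma le_antisym: "x \<in> C \<Longrightarrow> y \<in> C \<Longrightarrow> x \<preceq> y \<Longrightarrow> y \<preceq> x \<Longrightarrow> x = y"
  unfolding le_def using meet_commute by force

lemma le_trans: "x \<in> C \<Longrightarrow> y \<in> C \<Longrightarrow> z \<in> C \<Longrightarrow> x \<preceq> y \<Longrightarrow> y \<preceq> z \<Longrightarrow> x \<preceq> z"
  unfolding le_def using meet_assoc by force

lemma meet_le1: "x \<in> C \<Longrightarrow> y \<in> C \<Longrightarrow> x \<sqinter> y \<preceq> x"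
  unfolding le_def by (metis meet_assoc meet_commute meet_idem)

lemma meet_le2: "x \<in> C \<Longrightarrow> y \<in> C \<Longrightarrow> x \<sqinter> y \<preceq> y"
  unfolding le_def by (simp add: meet_assoc meet_idem)

lemma le_meet_iff: "x \<in> C \<Longrightarrow> y \<in> C \<Longrightarrow> z \<in> C \<Longrightarrow> z \<preceq> x \<sqinter> y \<longleftrightarrow> z \<preceq> x \<and> z \<preceq> y"
  unfolding le_def by (metis le_def le_trans meet_assoc meet_le1 meet_le2 carrier_closed(3))

lemma le_iff_join_eq: "x \<in> C \<Longrightarrow> y \<in> C \<Longrightarrow> x \<preceq> y \<longleftrightarrow> x \<squnion> y = y"
  unfolding le_def by (metis join_commute join_meet_absorb meet_commute meet_join_absorb)

lemma join_ge1: "x \<in> C \<Longrightarrow> y \<in> C \<Longrightarrow> x \<preceq> x \<squnion> y"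
  unfolding le_def by (simp add: meet_join_absorb)

lemma join_ge2: "x \<in> C \<Longrightarrow> y \<in> C \<Longrightarrow> y \<preceq> x \<squnion> y"
  using join_ge1[of y x] by (simp add: join_commute)

lemma join_le_iff: "x \<in> C \<Longrightarrow> y \<in> C \<Longrightarrow> z \<in> C \<Longrightarrow> x \<squnion> y \<preceq> z \<longleftrightarrow> x \<preceq> z \<and> y \<preceq> z"
proof
  assume "x \<in> C" "y \<in> C" "z \<in> C" and "x \<squnion> y \<preceq> z"
  then show "x \<preceq> z \<and> y \<preceq> z"
    by (meson join_ge1 join_ge2 le_trans carrier_closed(4))
next
  assume "x \<in> C" "y \<in> C" "z \<in> C" and "x \<preceq> z \<and> y \<preceq> z"
  then have "x \<squnion> z = z" "y \<squnion> z = z"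
    by (simp_all add: le_iff_join_eq)
  with \<open>x \<in> C\<close> \<open>y \<in> C\<close> \<open>z \<in> C\<close> show "x \<squnion> y \<preceq> z"
    by (simp add: le_iff_join_eq join_assoc)
qed

lemma eq_if_same_lower_bounds:
  "x \<in> C \<Longrightarrow> y \<in> C \<Longrightarrow> (\<And>z. z \<in> C \<Longrightarrow> z \<preceq> x \<longleftrightarrow> z \<preceq> y) \<Longrightarrow> x = y"
  by (meson le_antisym le_refl)

lemma eq_if_same_upper_bounds:
  "x \<in> C \<Longrightarrow> y \<in> C \<Longrightarrow> (\<And>z. z \<in> C \<Longrightarrow> x \<preceq> z \<longleftrightarrow> y \<preceq> z) \<Longrightarrow> x = y"
  by (meson le_antisym le_refl)

lemma meet_le_iff_le_imp: "x \<in> C \<Longrightarrow> y \<in> C \<Longrightarrow> z \<in> C \<Longrightarrow> x \<sqinter> y \<preceq> z \<longleftrightarrow> y \<preceq> (x \<Rightarrow>\<^sub>A z)"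
  by (simp add: le_imp_iff meet_commute)

lemma meet_join_distrib: "x \<in> C \<Longrightarrow> y \<in> C \<Longrightarrow> z \<in> C \<Longrightarrow> x \<sqinter> (y \<squnion> z) = x \<sqinter> y \<squnion> x \<sqinter> z"
  by (rule eq_if_same_upper_bounds) (simp_all add: meet_le_iff_le_imp join_le_iff)

lemma meet_le_if_le1: "x \<in> C \<Longrightarrow> y \<in> C \<Longrightarrow> z \<in> C \<Longrightarrow> x \<preceq> z \<Longrightarrow> x \<sqinter> y \<preceq> z"
  by (meson le_trans meet_le1 carrier_closed(3))

lemma meet_le_if_le2: "x \<in> C \<Longrightarrow> y \<in> C \<Longrightarrow> z \<in> C \<Longrightarrow> y \<preceq> z \<Longrightarrow> x \<sqinter> y \<preceq> z"
  by (meson le_trans meet_le2 carrier_closed(3))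

lemma le_imp_mp: "x \<in> C \<Longrightarrow> y \<in> C \<Longrightarrow> z \<in> C \<Longrightarrow> z \<preceq> x \<Longrightarrow> z \<preceq> (x \<Rightarrow>\<^sub>A y) \<Longrightarrow> z \<preceq> y"
  by (metis le_def le_imp_iff)

lemma le_imp_if_le: "x \<in> C \<Longrightarrow> y \<in> C \<Longrightarrow> y \<preceq> (x \<Rightarrow>\<^sub>A y)"
  by (simp add: le_imp_iff meet_le1)

lemma imp_meet_le: "x \<in> C \<Longrightarrow> y \<in> C \<Longrightarrow> (x \<Rightarrow>\<^sub>A y) \<sqinter> x \<preceq> y"
  using le_imp_iff[of x y "x \<Rightarrow>\<^sub>A y"] le_refl[of "x \<Rightarrow>\<^sub>A y"] by simp

lemma imp_right_mono: "x \<in> C \<Longrightarrow> y \<in> C \<Longrightarrow> z \<in> C \<Longrightarrow> x \<preceq> y \<Longrightarrow> (z \<Rightarrow>\<^sub>A x) \<preceq> (z \<Rightarrow>\<^sub>A y)"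
  using le_trans[OF _ _ _ imp_meet_le] by (simp add: le_imp_iff)

lemma imp_imp_le_imp_imp:
  assumes "a \<in> C" "x \<in> C" "y \<in> C"
  shows "(a \<Rightarrow>\<^sub>A (x \<Rightarrow>\<^sub>A y)) \<preceq> ((a \<Rightarrow>\<^sub>A x) \<Rightarrow>\<^sub>A (a \<Rightarrow>\<^sub>A y))"
proof -
  define w where "w = (a \<Rightarrow>\<^sub>A (x \<Rightarrow>\<^sub>A y)) \<sqinter> (a \<Rightarrow>\<^sub>A x) \<sqinter> a"
  have w: "w \<in> C" "w \<preceq> a" "w \<preceq> (a \<Rightarrow>\<^sub>A (x \<Rightarrow>\<^sub>A y))" "w \<preceq> (a \<Rightarrow>\<^sub>A x)"
    using assms by (simp_all add: w_def meet_le_if_le1 meet_le_if_le2 le_refl)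
  have "w \<preceq> y"
    using le_imp_mp[OF _ _ _ le_imp_mp[OF _ _ _ w(2,4)] le_imp_mp[OF _ _ _ w(2,3)]] assms w(1)
    by simp
  then show ?thesis
    using assms by (simp add: w_def le_imp_iff)
qed

lemma imp_imp_le_imp_meet:
  assumes "a \<in> C" "x \<in> C" "y \<in> C"
  shows "(a \<Rightarrow>\<^sub>A (x \<Rightarrow>\<^sub>A y)) \<preceq> ((x \<sqinter> a) \<Rightarrow>\<^sub>A (y \<sqinter> a))"
proof -
  define w where "w = (a \<Rightarrow>\<^sub>A (x \<Rightarrow>\<^sub>A y)) \<sqinter> (x \<sqinter> a)"
  have w: "w \<in> C" "w \<preceq> a" "w \<preceq> x" "w \<preceq> (a \<Rightarrow>\<^sub>A (x \<Rightarrow>\<^sub>A y))"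
    using assms by (simp_all add: w_def meet_le_if_le1 meet_le_if_le2 le_refl)
  have "w \<preceq> y"
    using le_imp_mp[OF _ _ _ w(3) le_imp_mp[OF _ _ _ w(2,4)]] assms w(1) by simp
  then show ?thesis
    using assms w by (simp add: w_def le_imp_iff le_meet_iff)
qed

end

locale heyting_pseudo_quotient = heyting +
  fixes a
  assumes a_carrier [simp]: "a \<in> C"
begin

abbreviation Q where "Q \<equiv> pseudo_quotient A a"
abbreviation cl where "cl \<equiv> cls A a"

lemma meet_meet_right_distrib: "x \<in> C \<Longrightarrow> y \<in> C \<Longrightarrow> x \<sqinter> y \<sqinter> a = (x \<sqinter> a) \<sqinter> (y \<sqinter> a)"
  by (rule eq_if_same_lower_bounds) (auto simp add: le_meet_iff)

lemma join_meet_right_distrib: "x \<in> C \<Longrightarrow> y \<in> C \<Longrightarrow> (x \<squnion> y) \<sqinter> a = x \<sqinter> a \<squnion> y \<sqinter> a"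
  using meet_join_distrib[of a x y] by (simp add: meet_commute)

lemma imp_meet_right:
  assumes "x \<in> C" "y \<in> C"
  shows "(x \<Rightarrow>\<^sub>A y) \<sqinter> a = ((x \<sqinter> a) \<Rightarrow>\<^sub>A (y \<sqinter> a)) \<sqinter> a"
proof (rule eq_if_same_lower_bounds)
  fix z assume "z \<in> C"
  show "z \<preceq> (x \<Rightarrow>\<^sub>A y) \<sqinter> a \<longleftrightarrow> z \<preceq> ((x \<sqinter> a) \<Rightarrow>\<^sub>A (y \<sqinter> a)) \<sqinter> a"
  proof (cases "z \<preceq> a")
    case True
    then have "z \<sqinter> (x \<sqinter> a) = z \<sqinter> x"
      using assms \<open>z \<in> C\<close> by (metis le_def meet_assoc meet_commute a_carrier)
    moreover have "z \<sqinter> x \<preceq> a"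
      using True assms \<open>z \<in> C\<close> by (simp add: meet_le_if_le1)
    ultimately show ?thesis
      using True assms \<open>z \<in> C\<close> by (simp add: le_meet_iff le_imp_iff)
  qed (use assms \<open>z \<in> C\<close> in \<open>simp add: le_meet_iff\<close>)
qed (use assms in simp_all)

lemma imp_meet_self: "x \<in> C \<Longrightarrow> (a \<Rightarrow>\<^sub>A x \<sqinter> a) = (a \<Rightarrow>\<^sub>A x)"
  by (rule eq_if_same_lower_bounds) (auto simp add: le_imp_iff le_meet_iff meet_le2)

lemma cls_eqI: "x \<sqinter> a = y \<sqinter> a \<Longrightarrow> cl x = cl y"
  by (simp add: cls_def)

lemma cls_eq_iff: "x \<in> C \<Longrightarrow> cl x = cl y \<longleftrightarrow> x \<sqinter> a = y \<sqinter> a"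
proof
  assume "x \<in> C" "cl x = cl y"
  then have "x \<in> cl y"
    unfolding cls_def by blast
  then show "x \<sqinter> a = y \<sqinter> a"
    by (simp add: cls_def)
qed (rule cls_eqI)

lemma rep_cls: "x \<in> C \<Longrightarrow> rep (cl x) \<in> C \<and> rep (cl x) \<sqinter> a = x \<sqinter> a"
  using someI[of "\<lambda>c. c \<in> cl x" x] by (simp add: rep_def cls_def)

lemma cls_of_reps:
  assumes "x \<in> C" "y \<in> C" and "\<And>u v. u \<in> C \<Longrightarrow> v \<in> C \<Longrightarrow> f u v \<sqinter> a = g (u \<sqinter> a) (v \<sqinter> a)"
  shows "cl (f (rep (cl x)) (rep (cl y))) = cl (f x y)"
  using assms rep_cls[of x] rep_cls[of y] by (intro cls_eqI) simp

lemma carrier_pseudo_quotient: "carrier Q = cl ` C"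
  by (simp add: pseudo_quotient_def)

lemma cls_in_carrier_pseudo_quotient: "x \<in> C \<Longrightarrow> cl x \<in> carrier Q"
  by (simp add: carrier_pseudo_quotient)

lemma ball_carrier_pseudo_quotient: "(\<forall>X\<in>carrier Q. P X) \<longleftrightarrow> (\<forall>x\<in>C. P (cl x))"
  by (simp add: carrier_pseudo_quotient)

lemma pseudo_quotient_meet: "x \<in> C \<Longrightarrow> y \<in> C \<Longrightarrow> meet Q (cl x) (cl y) = cl (x \<sqinter> y)"
  using cls_of_reps[of x y "meet A" "\<lambda>u v. u \<sqinter> v"] meet_meet_right_distrib
  by (simp add: pseudo_quotient_def)

lemma pseudo_quotient_join: "x \<in> C \<Longrightarrow> y \<in> C \<Longrightarrow> join Q (cl x) (cl y) = cl (x \<squnion> y)"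
  using cls_of_reps[of x y "join A" "\<lambda>u v. u \<squnion> v"] join_meet_right_distrib
  by (simp add: pseudo_quotient_def)

lemma pseudo_quotient_imp: "x \<in> C \<Longrightarrow> y \<in> C \<Longrightarrow> imp Q (cl x) (cl y) = cl (x \<Rightarrow>\<^sub>A y)"
  using cls_of_reps[of x y "imp A" "\<lambda>u v. (u \<Rightarrow>\<^sub>A v) \<sqinter> a"] imp_meet_right
  by (simp add: pseudo_quotient_def)

lemma pseudo_quotient_dia: "x \<in> C \<Longrightarrow> dia Q i (cl x) = cl (dia A i (x \<sqinter> a))"
  using rep_cls[of x] by (simp add: pseudo_quotient_def)

lemma pseudo_quotient_box: "x \<in> C \<Longrightarrow> box Q i (cl x) = cl (box A i (a \<Rightarrow>\<^sub>A x))"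
  using rep_cls[of x] imp_meet_self[of x] imp_meet_self[of "rep (cl x)"]
  by (simp add: pseudo_quotient_def)

lemma pseudo_quotient_bot: "bot Q = cl (bot A)"
  and pseudo_quotient_top: "top Q = cl (top A)"
  by (simp_all add: pseudo_quotient_def)

lemma pseudo_quotient_le_iff:
  assumes "x \<in> C" "y \<in> C"
  shows "le Q (cl x) (cl y) \<longleftrightarrow> x \<sqinter> a \<preceq> y"
proof -
  have "le Q (cl x) (cl y) \<longleftrightarrow> x \<sqinter> y \<sqinter> a = x \<sqinter> a"
    using assms by (simp add: le_def pseudo_quotient_meet cls_eq_iff)
  also have "\<dots> \<longleftrightarrow> x \<sqinter> a \<preceq> y \<sqinter> a"
    using assms by (simp add: le_def meet_meet_right_distrib)
  also have "\<dots> \<longleftrightarrow> x \<sqinter> a \<preceq> y"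
    using assms by (simp add: le_meet_iff meet_le2)
  finally show ?thesis .
qed

lemma pseudo_quotient_le_if_le: "x \<in> C \<Longrightarrow> y \<in> C \<Longrightarrow> x \<preceq> y \<Longrightarrow> le Q (cl x) (cl y)"
  by (simp add: pseudo_quotient_le_iff meet_le_if_le1)

lemma heyting_algebra_pseudo_quotient: "heyting_algebra Q"
proof -
  have residuation:
    "le Q (cl z) (imp Q (cl x) (cl y)) \<longleftrightarrow> le Q (meet Q (cl z) (cl x)) (cl y)"
    if "x \<in> C" "y \<in> C" "z \<in> C" for x y z
  proof -
    have "le Q (cl z) (imp Q (cl x) (cl y)) \<longleftrightarrow> z \<sqinter> a \<sqinter> x \<preceq> y"
      using that by (simp add: pseudo_quotient_imp pseudo_quotient_le_iff le_imp_iff)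
    also have "z \<sqinter> a \<sqinter> x = z \<sqinter> x \<sqinter> a"
      using that by (simp add: meet_assoc meet_commute[of a x])
    also have "z \<sqinter> x \<sqinter> a \<preceq> y \<longleftrightarrow> le Q (meet Q (cl z) (cl x)) (cl y)"
      using that by (simp add: pseudo_quotient_meet pseudo_quotient_le_iff)
    finally show ?thesis .
  qed
  show ?thesis
    unfolding heyting_algebra_def ball_carrier_pseudo_quotient
    using residuation
    by (simp add: cls_in_carrier_pseudo_quotient pseudo_quotient_meet pseudo_quotient_join
        pseudo_quotient_imp pseudo_quotient_bot pseudo_quotient_top pseudo_quotient_le_if_le
        bot_le le_top
        meet_assoc join_assoc meet_join_absorb join_meet_absorb)
      (simp add: meet_commute join_commute)
qed

end

locale monadic =
  fixes Ag :: "'i set" and A :: "('i, 'a) mha"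
  assumes monadic_heyting_algebra: "monadic_heyting_algebra Ag A"

sublocale monadic \<subseteq> heyting
  using monadic_heyting_algebra by unfold_locales (simp add: monadic_heyting_algebra_def)

context monadic
begin

lemma dia_closed [simp]: "i \<in> Ag \<Longrightarrow> x \<in> C \<Longrightarrow> dia A i x \<in> C"
  and box_closed [simp]: "i \<in> Ag \<Longrightarrow> x \<in> C \<Longrightarrow> box A i x \<in> C"
  and dia_mono: "i \<in> Ag \<Longrightarrow> x \<in> C \<Longrightarrow> y \<in> C \<Longrightarrow> x \<preceq> y \<Longrightarrow> dia A i x \<preceq> dia A i y"
  and box_mono: "i \<in> Ag \<Longrightarrow> x \<in> C \<Longrightarrow> y \<in> C \<Longrightarrow> x \<preceq> y \<Longrightarrow> box A i x \<preceq> box A i y"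
  and le_dia: "i \<in> Ag \<Longrightarrow> x \<in> C \<Longrightarrow> x \<preceq> dia A i x"
  and box_le: "i \<in> Ag \<Longrightarrow> x \<in> C \<Longrightarrow> box A i x \<preceq> x"
  and dia_join_le: "i \<in> Ag \<Longrightarrow> x \<in> C \<Longrightarrow> y \<in> C \<Longrightarrow> dia A i (x \<squnion> y) \<preceq> dia A i x \<squnion> dia A i y"
  and box_imp_le_imp_box:
    "i \<in> Ag \<Longrightarrow> x \<in> C \<Longrightarrow> y \<in> C \<Longrightarrow> box A i (x \<Rightarrow>\<^sub>A y) \<preceq> (box A i x \<Rightarrow>\<^sub>A box A i y)"
  and dia_le_box_dia: "i \<in> Ag \<Longrightarrow> x \<in> C \<Longrightarrow> dia A i x \<preceq> box A i (dia A i x)"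
  and dia_box_le_box: "i \<in> Ag \<Longrightarrow> x \<in> C \<Longrightarrow> dia A i (box A i x) \<preceq> box A i x"
  and box_imp_le_imp_dia:
    "i \<in> Ag \<Longrightarrow> x \<in> C \<Longrightarrow> y \<in> C \<Longrightarrow> box A i (x \<Rightarrow>\<^sub>A y) \<preceq> (dia A i x \<Rightarrow>\<^sub>A dia A i y)"
  and dia_bot_le: "i \<in> Ag \<Longrightarrow> dia A i (bot A) \<preceq> bot A"
  and top_le_box_top: "i \<in> Ag \<Longrightarrow> top A \<preceq> box A i (top A)"
  using monadic_heyting_algebra unfolding monadic_heyting_algebra_def by blast+

end

locale monadic_pseudo_quotient = monadic Ag A + heyting_pseudo_quotient A a
  for Ag :: "'i set" and A :: "('i, 'a) mha" and a
begin

lemma pseudo_quotient_dia_closed: "i \<in> Ag \<Longrightarrow> x \<in> C \<Longrightarrow> dia Q i (cl x) \<in> carrier Q"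
  and pseudo_quotient_box_closed: "i \<in> Ag \<Longrightarrow> x \<in> C \<Longrightarrow> box Q i (cl x) \<in> carrier Q"
  by (simp_all add: pseudo_quotient_dia pseudo_quotient_box cls_in_carrier_pseudo_quotient)

lemma pseudo_quotient_le_iff_meet_le_meet:
  "x \<in> C \<Longrightarrow> y \<in> C \<Longrightarrow> le Q (cl x) (cl y) \<longleftrightarrow> x \<sqinter> a \<preceq> y \<sqinter> a"
  by (simp add: pseudo_quotient_le_iff le_meet_iff meet_le2)

lemma pseudo_quotient_dia_mono:
  assumes "i \<in> Ag" "x \<in> C" "y \<in> C" "le Q (cl x) (cl y)"
  shows "le Q (dia Q i (cl x)) (dia Q i (cl y))"
proof -
  have "dia A i (x \<sqinter> a) \<preceq> dia A i (y \<sqinter> a)"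
    using assms by (simp add: pseudo_quotient_le_iff_meet_le_meet dia_mono)
  then show ?thesis
    using assms by (simp add: pseudo_quotient_dia pseudo_quotient_le_if_le)
qed

lemma pseudo_quotient_box_mono:
  assumes "i \<in> Ag" "x \<in> C" "y \<in> C" "le Q (cl x) (cl y)"
  shows "le Q (box Q i (cl x)) (box Q i (cl y))"
proof -
  have "(a \<Rightarrow>\<^sub>A x \<sqinter> a) \<preceq> (a \<Rightarrow>\<^sub>A y \<sqinter> a)"
    using assms by (simp add: pseudo_quotient_le_iff_meet_le_meet imp_right_mono)
  then show ?thesis
    using assms by (simp add: imp_meet_self pseudo_quotient_box pseudo_quotient_le_if_le box_mono)
qed

lemma pseudo_quotient_le_dia: "i \<in> Ag \<Longrightarrow> x \<in> C \<Longrightarrow> le Q (cl x) (dia Q i (cl x))"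
  by (simp add: pseudo_quotient_dia pseudo_quotient_le_iff le_dia)

lemma pseudo_quotient_box_le: "i \<in> Ag \<Longrightarrow> x \<in> C \<Longrightarrow> le Q (box Q i (cl x)) (cl x)"
  using le_imp_mp[of a x "box A i (a \<Rightarrow>\<^sub>A x) \<sqinter> a"]
  by (simp add: pseudo_quotient_box pseudo_quotient_le_iff meet_le2 meet_le_if_le1 box_le)

lemma pseudo_quotient_dia_join_le:
  "i \<in> Ag \<Longrightarrow> x \<in> C \<Longrightarrow> y \<in> C \<Longrightarrow>
    le Q (dia Q i (join Q (cl x) (cl y))) (join Q (dia Q i (cl x)) (dia Q i (cl y)))"
  by (simp add: pseudo_quotient_join pseudo_quotient_dia join_meet_right_distrib dia_join_le
      pseudo_quotient_le_if_le)

lemma pseudo_quotient_box_imp_le_imp_box: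
  "i \<in> Ag \<Longrightarrow> x \<in> C \<Longrightarrow> y \<in> C \<Longrightarrow>
    le Q (box Q i (imp Q (cl x) (cl y))) (imp Q (box Q i (cl x)) (box Q i (cl y)))"
  using le_trans[OF _ _ _ box_mono[OF _ _ _ imp_imp_le_imp_imp] box_imp_le_imp_box]
  by (simp add: pseudo_quotient_imp pseudo_quotient_box pseudo_quotient_le_if_le)

lemma pseudo_quotient_dia_le_box_dia:
  "i \<in> Ag \<Longrightarrow> x \<in> C \<Longrightarrow> le Q (dia Q i (cl x)) (box Q i (dia Q i (cl x)))"
  using le_trans[OF _ _ _ dia_le_box_dia box_mono[OF _ _ _ le_imp_if_le]]
  by (simp add: pseudo_quotient_dia pseudo_quotient_box pseudo_quotient_le_if_le)

lemma pseudo_quotient_dia_box_le_box: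
  "i \<in> Ag \<Longrightarrow> x \<in> C \<Longrightarrow> le Q (dia Q i (box Q i (cl x))) (box Q i (cl x))"
  using le_trans[OF _ _ _ dia_mono[OF _ _ _ meet_le1] dia_box_le_box]
  by (simp add: pseudo_quotient_dia pseudo_quotient_box pseudo_quotient_le_if_le)

lemma pseudo_quotient_box_imp_le_imp_dia:
  "i \<in> Ag \<Longrightarrow> x \<in> C \<Longrightarrow> y \<in> C \<Longrightarrow>
    le Q (box Q i (imp Q (cl x) (cl y))) (imp Q (dia Q i (cl x)) (dia Q i (cl y)))"
  using le_trans[OF _ _ _ box_mono[OF _ _ _ imp_imp_le_imp_meet] box_imp_le_imp_dia]
  by (simp add: pseudo_quotient_imp pseudo_quotient_box pseudo_quotient_dia
      pseudo_quotient_le_if_le)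

lemma pseudo_quotient_dia_bot_le:
  assumes "i \<in> Ag"
  shows "le Q (dia Q i (bot Q)) (bot Q)"
proof -
  have "bot A \<sqinter> a = bot A"
    using bot_le[of a] by (simp add: le_def)
  then show ?thesis
    using assms dia_bot_le
    by (simp add: pseudo_quotient_bot pseudo_quotient_dia pseudo_quotient_le_if_le)
qed

lemma pseudo_quotient_top_le_box_top:
  assumes "i \<in> Ag"
  shows "le Q (top Q) (box Q i (top Q))"
proof -
  have "box A i (top A) \<preceq> box A i (a \<Rightarrow>\<^sub>A top A)"
    using assms le_imp_if_le[of a "top A"] by (simp add: box_mono)
  then have "top A \<preceq> box A i (a \<Rightarrow>\<^sub>A top A)"
    using assms le_trans[OF _ _ _ top_le_box_top] by simp
  then show ?thesis
    using assms by (simp add: pseudo_quotient_top pseudo_quotient_box pseudo_quotient_le_if_le)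
qed

lemma monadic_heyting_algebra_pseudo_quotient: "monadic_heyting_algebra Ag Q"
  unfolding monadic_heyting_algebra_def ball_carrier_pseudo_quotient
  using heyting_algebra_pseudo_quotient
  by (simp add: pseudo_quotient_dia_closed pseudo_quotient_box_closed pseudo_quotient_dia_mono
      pseudo_quotient_box_mono pseudo_quotient_le_dia pseudo_quotient_box_le
      pseudo_quotient_dia_join_le pseudo_quotient_box_imp_le_imp_box
      pseudo_quotient_dia_le_box_dia pseudo_quotient_dia_box_le_box
      pseudo_quotient_box_imp_le_imp_dia pseudo_quotient_dia_bot_le pseudo_quotient_top_le_box_top)

lemma epistemic_heyting_algebra_pseudo_quotient:
  assumes "epistemic_heyting_algebra Ag A"
  shows "epistemic_heyting_algebra Ag Q"
proof -
  have "join Q (dia Q i (cl x)) (neg Q (dia Q i (cl x))) = top Q" if "i \<in> Ag" "x \<in> C" for i x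
  proof -
    have "dia A i (x \<sqinter> a) \<squnion> (dia A i (x \<sqinter> a) \<Rightarrow>\<^sub>A bot A) = top A"
      using assms that by (simp add: epistemic_heyting_algebra_def neg_def)
    then show ?thesis
      using that by (simp add: neg_def pseudo_quotient_dia pseudo_quotient_imp pseudo_quotient_join
          pseudo_quotient_bot pseudo_quotient_top)
  qed
  moreover have "finite (carrier Q)"
    using assms by (simp add: epistemic_heyting_algebra_def carrier_pseudo_quotient)
  ultimately show ?thesis
    unfolding epistemic_heyting_algebra_def ball_carrier_pseudo_quotient
    using monadic_heyting_algebra_pseudo_quotient by simp
qed

end

theorem proposition8:
  fixes Ag :: "'i set" and A :: "('i, 'a) mha" and a :: 'a
  assumes "epistemic_heyting_algebra Ag A"
    and "a \<in> carrier A"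
  shows "epistemic_heyting_algebra Ag (pseudo_quotient A a)"
proof -
  interpret monadic_pseudo_quotient Ag A a
    by unfold_locales
      (use assms in \<open>simp_all add: epistemic_heyting_algebra_def monadic_heyting_algebra_def\<close>)
  show ?thesis
    using epistemic_heyting_algebra_pseudo_quotient assms(1) .
qed

end
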